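(* Let $d\ge1$ and $q\ge2$ even. Let $G$ be a function on $[0,\infty)$ such that $x^{d+q}G(x)\to0$ as $x\to\infty$ and $G^{(1)}$ is continuous almost everywhere. Then the following are equivalent: (i) $G\in\mathcal M_{d,0,q}$ and $G$ is differentiable; (ii) $G^{(1)}\in\mathcal M_{d,1,q+1}$.
   Context: $B_{d,i}(g)=\int_0^\infty x^{d-1+i}g(x)dx$, $b_d=2\pi^{d/2}/\Gamma(d/2)$. $\mathcal M_{d,0,q}$: functions $g$ on $[0,\infty)$ with $B_{d,0}(g)=b_d^{-1}$, $B_{d,i}(g)=0$ for $i=2,4,\ldots,q-2$, $B_{d,q}(g)\ne0$. $\mathcal M_{d,1,q+1}$: functions $g$ with $B_{d,1}(g)=-d\,b_d^{-1}$, $B_{d,i}(g)=0$ for $i=3,5,\ldots,q-1$, $B_{d,q+1}(g)\ne0$. *)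

theory Defs
  imports "HOL-Analysis.Analysis"
begin

text \<open>b_d = 2 pi^(d/2) / Gamma(d/2), the surface area of the unit sphere in R^d.\<close>
definition bconst :: "nat \<Rightarrow> real" where
  "bconst d = 2 * pi powr (real d / 2) / Gamma (real d / 2)"

definition Bfun :: "nat \<Rightarrow> nat \<Rightarrow> (real \<Rightarrow> real) \<Rightarrow> real \<Rightarrow> real" where
  "Bfun d i g = (\<lambda>x. x ^ (d - 1 + i) * g x)"

text \<open>B_{d,i}(g), as a (Henstock-Kurzweil, i.e. improper) integral over [0,infty).\<close>
definition Bmom :: "nat \<Rightarrow> nat \<Rightarrow> (real \<Rightarrow> real) \<Rightarrow> real" where
  "Bmom d i g = integral {0..} (Bfun d i g)"

definition M0 :: "nat \<Rightarrow> nat \<Rightarrow> (real \<Rightarrow> real) set" where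
  "M0 d q = {g.
     (\<forall>i. (i = 0 \<or> (even i \<and> 2 \<le> i \<and> i \<le> q)) \<longrightarrow> Bfun d i g integrable_on {0..}) \<and>
     Bmom d 0 g = 1 / bconst d \<and>
     (\<forall>i. even i \<and> 2 \<le> i \<and> i \<le> q - 2 \<longrightarrow> Bmom d i g = 0) \<and>
     Bmom d q g \<noteq> 0}"

definition M1 :: "nat \<Rightarrow> nat \<Rightarrow> (real \<Rightarrow> real) set" where
  "M1 d q = {g.
     (\<forall>i. (i = 1 \<or> (odd i \<and> 3 \<le> i \<and> i \<le> q + 1)) \<longrightarrow> Bfun d i g integrable_on {0..}) \<and>
     Bmom d 1 g = - real d / bconst d \<and>
     (\<forall>i. odd i \<and> 3 \<le> i \<and> i \<le> q - 1 \<longrightarrow> Bmom d i g = 0) \<and>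
     Bmom d (q + 1) g \<noteq> 0}"

end

theory Submission
  imports Defs
begin

text \<open>Integrating by parts on [0, b] and letting b tend to infinity, the decay of
  x^(d+q) G(x) kills the boundary term, so for every i \<le> q the moment B_{d,i+1}(G')
  exists iff B_{d,i}(G) does, and then B_{d,i+1}(G') = -(d+i) B_{d,i}(G). Since d + i > 0,
  the defining conditions of M_{d,1,q+1} are exactly those of M_{d,0,q} shifted by one index.\<close>

lemma has_integral_atLeast_iff_tendsto:
  fixes f :: "real \<Rightarrow> 'b::banach"
  assumes int: "\<And>b. f integrable_on {a..b}"
  shows "(f has_integral L) {a..} \<longleftrightarrow> ((\<lambda>b. integral {a..b} f) \<longlongrightarrow> L) at_top"
proof -
  let ?g = "\<lambda>x. if x \<in> {a..} then f x else 0"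
  have restrict: "integral (cbox a' b) ?g = integral {a..b} f" if "a' \<le> a" for a' b
  proof -
    have "{a..} \<inter> cbox a' b = {a..b}" using that by auto
    then show ?thesis by (simp only: integral_restrict_Int)
  qed
  have restrict_integrable: "?g integrable_on cbox a' b" for a' b
  proof -
    have "{a..} \<inter> cbox a' b = {max a a'..b}" by auto
    then show ?thesis
      using integrable_on_subinterval[OF int[of b], of "max a a'" b]
      by (simp only: integrable_restrict_Int) auto
  qed
  have ball_subset: "ball 0 B \<subseteq> cbox a' b \<longleftrightarrow> a' \<le> -B \<and> B \<le> b" if "B > 0" for B a' b :: real
    using that by (auto simp: ball_eq_greaterThanLessThan greaterThanLessThan_subseteq_atLeastAtMost_iff)
  show ?thesis
  proof
    assume "(f has_integral L) {a..}"
    then show "((\<lambda>b. integral {a..b} f) \<longlongrightarrow> L) at_top"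
      unfolding tendsto_iff eventually_at_top_linorder dist_norm
    proof (intro allI impI)
      fix e :: real assume "e > 0"
      with \<open>(f has_integral L) {a..}\<close> obtain B where B: "B > 0"
        "\<And>a' b. ball 0 B \<subseteq> cbox a' b \<Longrightarrow> norm (integral (cbox a' b) ?g - L) < e"
        unfolding has_integral_alt' by blast
      have "norm (integral {a..b} f - L) < e" if "b \<ge> B" for b
        using B(2)[of "min a (-B)" b] restrict[of "min a (-B)" b] ball_subset[OF B(1)] that
        by simp
      then show "\<exists>B. \<forall>b\<ge>B. norm (integral {a..b} f - L) < e" by blast
    qed
  next
    assume lim: "((\<lambda>b. integral {a..b} f) \<longlongrightarrow> L) at_top"
    show "(f has_integral L) {a..}"
      unfolding has_integral_alt'
    proof (intro conjI allI impI restrict_integrable)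
      fix e :: real assume "e > 0"
      then obtain B0 where B0: "\<And>b. b \<ge> B0 \<Longrightarrow> norm (integral {a..b} f - L) < e"
        using lim unfolding tendsto_iff eventually_at_top_linorder dist_norm by blast
      define B where "B = max 1 (max \<bar>a\<bar> B0)"
      have "B > 0" "\<bar>a\<bar> \<le> B" "B0 \<le> B" by (auto simp: B_def)
      then show "\<exists>B>0. \<forall>a' b. ball 0 B \<subseteq> cbox a' b \<longrightarrow> norm (integral (cbox a' b) ?g - L) < e"
      proof (intro exI conjI allI impI)
        fix a' b :: real assume "ball 0 B \<subseteq> cbox a' b"
        then have "a' \<le> a" "B0 \<le> b"
          using ball_subset \<open>B > 0\<close> \<open>\<bar>a\<bar> \<le> B\<close> \<open>B0 \<le> B\<close> by auto
        then show "norm (integral (cbox a' b) ?g - L) < e" using B0 restrict by simp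
      qed
    qed
  qed
qed

lemma has_integral_power_mult_deriv:
  fixes G G' :: "real \<Rightarrow> real"
  assumes deriv: "\<And>x. x \<in> {0..b} \<Longrightarrow> (G has_real_derivative G' x) (at x within {0..b})"
    and "n \<ge> 1" and "b \<ge> 0"
  shows "((\<lambda>x. x^n * G' x) has_integral
           b^n * G b - real n * integral {0..b} (\<lambda>x. x^(n-1) * G x)) {0..b}"
proof -
  have "(\<lambda>x. x^(n-1) * G x) integrable_on {0..b}"
    by (intro integrable_continuous_real continuous_intros DERIV_continuous_on[OF deriv])
  then have scaled: "((\<lambda>x. real n * (x^(n-1) * G x)) has_integral
               real n * integral {0..b} (\<lambda>x. x^(n-1) * G x)) {0..b}"
    by (intro has_integral_mult_right integrable_integral)
  have ftc: "((\<lambda>x. real n * x^(n-1) * G x + x^n * G' x) has_integral b^n * G b - 0^n * G 0) {0..b}"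
    using \<open>b \<ge> 0\<close> deriv
    by (intro fundamental_theorem_of_calculus)
      (auto intro!: derivative_eq_intros simp: has_real_derivative_iff_has_vector_derivative[symmetric])
  from has_integral_diff[OF ftc scaled] show ?thesis
    using \<open>n \<ge> 1\<close> by (simp add: algebra_simps power_0_left)
qed

lemma has_integral_power_mult_deriv_iff:
  fixes G G' :: "real \<Rightarrow> real"
  assumes deriv: "\<And>x. x \<ge> 0 \<Longrightarrow> (G has_real_derivative G' x) (at x within {0..})"
    and "n \<ge> 1" and lim: "((\<lambda>x. x^n * G x) \<longlongrightarrow> 0) at_top"
  shows "((\<lambda>x. x^n * G' x) has_integral - real n * L) {0..} \<longleftrightarrow>
         ((\<lambda>x. x^(n-1) * G x) has_integral L) {0..}"
proof -
  have deriv_Icc: "(G has_real_derivative G' x) (at x within {0..b})" if "x \<in> {0..b}" for x b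
    using that by (intro DERIV_subset[OF deriv]) auto
  have "continuous_on {0..} G"
    using deriv by (intro DERIV_continuous_on) simp
  define F where "F b = integral {0..b} (\<lambda>x. x^(n-1) * G x)" for b
  define H where "H b = integral {0..b} (\<lambda>x. x^n * G' x)" for b
  have int_H: "(\<lambda>x. x^n * G' x) integrable_on {0..b}" for b
    using has_integral_power_mult_deriv[OF deriv_Icc \<open>n \<ge> 1\<close>, of b] by (cases "b \<ge> 0") auto
  have int_F: "(\<lambda>x. x^(n-1) * G x) integrable_on {0..b}" for b
    using \<open>continuous_on {0..} G\<close>
    by (intro integrable_continuous_real continuous_intros) (auto elim: continuous_on_subset)
  have H_eq: "\<forall>\<^sub>F b in at_top. H b = b^n * G b - real n * F b"
    using eventually_ge_at_top[of 0]
    by eventually_elim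
      (use has_integral_power_mult_deriv[OF deriv_Icc \<open>n \<ge> 1\<close>] in \<open>simp add: H_def F_def integral_unique\<close>)
  have "(H \<longlongrightarrow> - real n * L) at_top \<longleftrightarrow> (F \<longlongrightarrow> L) at_top"
  proof
    assume "(F \<longlongrightarrow> L) at_top"
    then have "((\<lambda>b. b^n * G b - real n * F b) \<longlongrightarrow> 0 - real n * L) at_top"
      by (intro tendsto_intros lim)
    then show "(H \<longlongrightarrow> - real n * L) at_top"
      using H_eq by (simp add: tendsto_cong)
  next
    assume H_lim: "(H \<longlongrightarrow> - real n * L) at_top"
    have "((\<lambda>b. (b^n * G b - H b) / real n) \<longlongrightarrow> (0 - - real n * L) / real n) at_top"
      using \<open>n \<ge> 1\<close> by (intro tendsto_divide[OF tendsto_diff[OF lim H_lim] tendsto_const]) simp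
    moreover have "\<forall>\<^sub>F b in at_top. F b = (b^n * G b - H b) / real n"
      using H_eq by eventually_elim (use \<open>n \<ge> 1\<close> in simp)
    ultimately show "(F \<longlongrightarrow> L) at_top"
      using \<open>n \<ge> 1\<close> by (simp add: tendsto_cong)
  qed
  then show ?thesis
    unfolding has_integral_atLeast_iff_tendsto[OF int_H] has_integral_atLeast_iff_tendsto[OF int_F]
      F_def H_def .
qed

lemma tendsto_zero_power_mult_mono:
  fixes f :: "real \<Rightarrow> real"
  assumes lim: "((\<lambda>x. x^m * f x) \<longlongrightarrow> 0) at_top" and "k \<le> m"
  shows "((\<lambda>x. x^k * f x) \<longlongrightarrow> 0) at_top"
proof (rule Lim_null_comparison)
  show "\<forall>\<^sub>F x in at_top. norm (x^k * f x) \<le> \<bar>x^m * f x\<bar>"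
    using eventually_ge_at_top[of 1]
  proof eventually_elim
    case (elim x)
    then have "x^k \<le> x^m" using \<open>k \<le> m\<close> by (intro power_increasing)
    with elim show ?case by (simp add: abs_mult mult_right_mono)
  qed
  show "((\<lambda>x. \<bar>x^m * f x\<bar>) \<longlongrightarrow> 0) at_top"
    using tendsto_rabs_zero[OF lim] .
qed

lemma
  fixes G G' :: "real \<Rightarrow> real"
  assumes "d \<ge> 1"
    and deriv: "\<And>x. x \<ge> 0 \<Longrightarrow> (G has_real_derivative G' x) (at x within {0..})"
    and lim: "((\<lambda>x. x^(d+i) * G x) \<longlongrightarrow> 0) at_top"
  shows integrable_Bfun_Suc_deriv_iff:
      "Bfun d (Suc i) G' integrable_on {0..} \<longleftrightarrow> Bfun d i G integrable_on {0..}"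
    and Bmom_Suc_deriv: "Bmom d (Suc i) G' = - (real d + real i) * Bmom d i G"
proof -
  have n: "d + i \<ge> 1" and nz: "real d + real i \<noteq> 0" using \<open>d \<ge> 1\<close> by simp_all
  have Bfun_eqs: "Bfun d (Suc i) G' = (\<lambda>x. x^(d+i) * G' x)" "Bfun d i G = (\<lambda>x. x^(d+i-1) * G x)"
    using \<open>d \<ge> 1\<close> by (auto simp: Bfun_def)
  have has_integral_iff: "(Bfun d (Suc i) G' has_integral - (real d + real i) * L) {0..} \<longleftrightarrow>
      (Bfun d i G has_integral L) {0..}" for L
    using has_integral_power_mult_deriv_iff[OF deriv n lim] unfolding Bfun_eqs by simp
  show int_iff: "Bfun d (Suc i) G' integrable_on {0..} \<longleftrightarrow> Bfun d i G integrable_on {0..}"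
  proof
    assume "Bfun d (Suc i) G' integrable_on {0..}"
    then obtain M where M: "(Bfun d (Suc i) G' has_integral M) {0..}" by blast
    have "- (real d + real i) * (- M / (real d + real i)) = M" using nz by (simp add: field_simps)
    then have "(Bfun d i G has_integral - M / (real d + real i)) {0..}"
      using has_integral_iff[of "- M / (real d + real i)"] M by simp
    then show "Bfun d i G integrable_on {0..}" by blast
  next
    assume "Bfun d i G integrable_on {0..}"
    then show "Bfun d (Suc i) G' integrable_on {0..}"
      using has_integral_iff by blast
  qed
  show "Bmom d (Suc i) G' = - (real d + real i) * Bmom d i G"
  proof (cases "Bfun d i G integrable_on {0..}")
    case True
    then show ?thesis
      using has_integral_iff unfolding Bmom_def by blast
  next
    case False
    then show ?thesis
      using int_iff unfolding Bmom_def by (simp add: not_integrable_integral)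
  qed
qed

lemma M1_iff_M0_of_moment_shift:
  fixes G G' :: "real \<Rightarrow> real"
  assumes "d \<ge> 1"
    and integrable_iff: "\<And>i. i \<le> q \<Longrightarrow>
          Bfun d (Suc i) G' integrable_on {0..} \<longleftrightarrow> Bfun d i G integrable_on {0..}"
    and moment_eq: "\<And>i. i \<le> q \<Longrightarrow> Bmom d (Suc i) G' = - (real d + real i) * Bmom d i G"
  shows "G' \<in> M1 d q \<longleftrightarrow> G \<in> M0 d q"
proof -
  have shift: "(\<forall>i. P i \<longrightarrow> R i) \<longleftrightarrow> (\<forall>j. P (Suc j) \<longrightarrow> R (Suc j))" if "\<not> P 0" for P R
    using that by (metis not0_implies_Suc)
  have "(\<forall>i. (i = 1 \<or> odd i \<and> 3 \<le> i \<and> i \<le> q + 1) \<longrightarrow> Bfun d i G' integrable_on {0..}) \<longleftrightarrow>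
        (\<forall>j. (j = 0 \<or> even j \<and> 2 \<le> j \<and> j \<le> q) \<longrightarrow> Bfun d j G integrable_on {0..})"
    by (subst shift) (auto simp: integrable_iff)
  moreover have "Bmom d 1 G' = - real d / bconst d \<longleftrightarrow> Bmom d 0 G = 1 / bconst d"
    using moment_eq[of 0] \<open>d \<ge> 1\<close> by (simp add: divide_inverse)
  moreover have "(\<forall>i. odd i \<and> 3 \<le> i \<and> i \<le> q - 1 \<longrightarrow> Bmom d i G' = 0) \<longleftrightarrow>
        (\<forall>j. even j \<and> 2 \<le> j \<and> j \<le> q - 2 \<longrightarrow> Bmom d j G = 0)"
    by (subst shift) (auto simp: moment_eq)
  moreover have "Bmom d (q + 1) G' \<noteq> 0 \<longleftrightarrow> Bmom d q G \<noteq> 0"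
    using moment_eq[of q] \<open>d \<ge> 1\<close> by simp
  ultimately show ?thesis
    unfolding M0_def M1_def by blast
qed

theorem lemmaB7:
  fixes d q :: nat and G G1 :: "real \<Rightarrow> real"
  assumes "d \<ge> 1" and "q \<ge> 2" and "even q"
    and deriv: "\<And>x. x \<ge> 0 \<Longrightarrow> (G has_real_derivative G1 x) (at x within {0..})"
    and decay: "((\<lambda>x. x ^ (d + q) * G x) \<longlongrightarrow> 0) at_top"
    and cont_ae: "AE x in lborel. x \<ge> 0 \<longrightarrow> isCont G1 x"
  shows "(G \<in> M0 d q \<and> (\<forall>x\<ge>0. G differentiable (at x within {0..})))
           \<longleftrightarrow> G1 \<in> M1 d q"
proof -
  have decay_i: "((\<lambda>x. x^(d+i) * G x) \<longlongrightarrow> 0) at_top" if "i \<le> q" for i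
    using tendsto_zero_power_mult_mono[OF decay] that by simp
  have "G1 \<in> M1 d q \<longleftrightarrow> G \<in> M0 d q"
    using \<open>d \<ge> 1\<close> integrable_Bfun_Suc_deriv_iff[OF \<open>d \<ge> 1\<close> deriv decay_i]
      Bmom_Suc_deriv[OF \<open>d \<ge> 1\<close> deriv decay_i]
    by (rule M1_iff_M0_of_moment_shift)
  moreover have "\<forall>x\<ge>0. G differentiable (at x within {0..})"
    using deriv real_differentiable_def by blast
  ultimately show ?thesis by blast
qed

end
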